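(* Let $M\ge2$ be an integer, $\tau=\tau_M$, and let $U_0,\dots,U_{M-1}$, $V_0,\dots,V_{M-1}$ be non-negative real numbers. Then $$\sum_{\mu=0}^{2M-2}\ \max_{\substack{\kappa+\lambda=\mu\\0\le\kappa,\lambda\le M-1}}(U_\kappa V_\lambda)^\tau\ge\left(\sum_{\kappa=0}^{M-1}U_\kappa\right)^\tau\left(\sum_{\lambda=0}^{M-1}V_\lambda\right)^\tau.$$
   Context: $\tau_M$ is the positive solution of $(1/M)^{2\tau}+((M-1)/M)^\tau=1$. *)

theory Defs
  imports "HOL-Analysis.Analysis"
begin

definition tau :: "nat \<Rightarrow> real" where
  "tau M = (THE t. t > 0 \<and> (1 / real M) powr (2 * t) + ((real M - 1) / real M) powr t = 1)"

end

theory Submission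
  imports Defs
begin

text \<open>
  For non-increasing sequences with sums \<open>A\<close> and \<open>B\<close> the inequality follows by induction on
  the lengths: if \<open>x = a\<^sub>0/A \<le> b\<^sub>0/B\<close>, the first antidiagonal contributes at least
  \<open>(a\<^sub>0 b\<^sub>0)\<^sup>\<tau> \<ge> x\<^sup>2\<^sup>\<tau> A\<^sup>\<tau> B\<^sup>\<tau>\<close> and the remaining ones, by induction for the tail of \<open>a\<close>,
  at least \<open>(1 - x)\<^sup>\<tau> A\<^sup>\<tau> B\<^sup>\<tau>\<close>. It suffices that \<open>x\<^sup>2\<^sup>\<tau> + (1 - x)\<^sup>\<tau> \<ge> 1\<close>, and as \<open>x \<ge> 1/M\<close> this
  holds because \<open>\<tau>\<^sub>M\<close> is exactly the exponent for which \<open>x = 1/M\<close> gives equality.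

  General sequences are reduced to this case by sorting: the sum of the antidiagonal maxima can
  only decrease, because the \<open>k\<close>-th of them is dominated by at least \<open>k + 1\<close> antidiagonal
  maxima of the original sequences (a sumset of sets of sizes \<open>r + 1\<close> and \<open>s + 1\<close> in \<open>\<nat>\<close> has at
  least \<open>r + s + 1\<close> elements).
\<close>

lemma concave_on_ln_weighted:
  fixes \<alpha> \<beta> c :: real
  assumes "0 \<le> \<alpha>" "0 \<le> \<beta>"
  shows "concave_on {0<..<1} (\<lambda>y. c + \<alpha> * ln y + \<beta> * ln (1 - y))"
proof (rule f''_le0_imp_concave)
  show "((\<lambda>y. c + \<alpha> * ln y + \<beta> * ln (1 - y)) has_real_derivative \<alpha> / y - \<beta> / (1 - y)) (at y)"
    if "y \<in> {0<..<1}" for y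
    using that by (auto intro!: derivative_eq_intros simp: field_simps)
  show "((\<lambda>y. \<alpha> / y - \<beta> / (1 - y)) has_real_derivative - \<alpha> / y\<^sup>2 - \<beta> / (1 - y)\<^sup>2) (at y)"
    if "y \<in> {0<..<1}" for y
    using that by (auto intro!: derivative_eq_intros simp: field_simps power2_eq_square)
  have "0 \<le> \<alpha> / y\<^sup>2" "0 \<le> \<beta> / (1 - y)\<^sup>2" for y
    using assms by simp_all
  then show "- \<alpha> / y\<^sup>2 - \<beta> / (1 - y)\<^sup>2 \<le> 0" for y
    by (smt (verit) minus_divide_left)
qed auto

lemma sgn_exp_diff: "sgn (exp a - exp b) = sgn (a - b :: real)"
  by (cases a b rule: linorder_cases) (auto simp: sgn_if)

lemma sgn_powr_balance_deriv:
  fixes t y :: real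
  assumes "0 < t" "0 < y" "y < 1"
  shows "sgn (2*t * y powr (2*t-1) - t * (1-y) powr (t-1))
       = sgn (ln 2 + (2*t-1) * ln y + (1-t) * ln (1-y))"
proof -
  define a where "a = ln 2 + (2*t-1) * ln y"
  define b where "b = (t-1) * ln (1-y)"
  have "exp a = 2 * y powr (2*t-1)" and "exp b = (1-y) powr (t-1)"
    using assms by (simp_all add: a_def b_def exp_add powr_def)
  then have "2*t * y powr (2*t-1) - t * (1-y) powr (t-1) = t * (exp a - exp b)"
    by (simp add: algebra_simps)
  moreover have "ln 2 + (2*t-1) * ln y + (1-t) * ln (1-y) = a - b"
    by (simp add: a_def b_def algebra_simps)
  ultimately show ?thesis using assms by (simp add: sgn_mult sgn_exp_diff)
qed

lemma MVT_has_real_derivative: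
  fixes f f' :: "real \<Rightarrow> real"
  assumes "a < b" "continuous_on {a..b} f"
    and "\<And>x. a < x \<Longrightarrow> x < b \<Longrightarrow> (f has_real_derivative f' x) (at x)"
  obtains z where "a < z" "z < b" "f b - f a = (b - a) * f' z"
proof -
  obtain l z where z: "a < z" "z < b" "(f has_real_derivative l) (at z)" "f b - f a = (b - a) * l"
    using MVT[OF assms(1,2)] assms(3) real_differentiable_def by meson
  moreover have "l = f' z" using DERIV_unique[OF z(3) assms(3)] z by simp
  ultimately show ?thesis using that by blast
qed

text \<open>
  \<open>f(x) = x\<^sup>2\<^sup>t + (1 - x)\<^sup>t\<close> equals \<open>1\<close> at \<open>0\<close>, \<open>c\<close> and \<open>1\<close>. A value below \<open>1\<close> in \<open>(c, 1)\<close> would force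
  \<open>f'\<close> to vanish, become negative and become positive again, in this order, but the sign of \<open>f'\<close>
  is that of a concave function.
\<close>
lemma one_le_powr_double_add_powr_compl:
  fixes t c x :: real
  assumes t: "1/2 \<le> t" "t < 1" and c: "0 < c" "c < 1"
    and root: "c powr (2*t) + (1-c) powr t = 1"
    and x: "c \<le> x" "x \<le> 1"
  shows "1 \<le> x powr (2*t) + (1-x) powr t"
proof (rule ccontr)
  define f where "f y = y powr (2*t) + (1-y) powr t" for y :: real
  define f' where "f' y = 2*t * y powr (2*t-1) - t * (1-y) powr (t-1)" for y :: real
  define P where "P y = ln 2 + (2*t-1) * ln y + (1-t) * ln (1-y)" for y :: real
  assume "\<not> 1 \<le> x powr (2*t) + (1-x) powr t"
  then have fx: "f x < 1" by (simp add: f_def)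
  have f0: "f 0 = 1" and f1: "f 1 = 1" and fc: "f c = 1" using root t by (auto simp: f_def)
  have cx: "c < x" and x1: "x < 1" using fx fc f1 x by (auto simp: le_less)
  have mvt: "\<exists>z. a < z \<and> z < b \<and> f b - f a = (b - a) * f' z"
    if "0 \<le> a" "a < b" "b \<le> 1" for a b
  proof (rule MVT_has_real_derivative[OF \<open>a < b\<close>])
    have "continuous_on {0..1} f"
      unfolding f_def using t by (intro continuous_intros continuous_on_powr') auto
    then show "continuous_on {a..b} f" by (rule continuous_on_subset) (use that in auto)
    show "(f has_real_derivative f' y) (at y)" if "a < y" "y < b" for y
      using that \<open>0 \<le> a\<close> \<open>b \<le> 1\<close> t unfolding f_def f'_def by (auto intro!: derivative_eq_intros)
  qed blast
  obtain z1 where z1: "0 < z1" "z1 < c" "f c - f 0 = c * f' z1"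
    using mvt[of 0 c] c by auto
  obtain z2 where z2: "c < z2" "z2 < x" "f x - f c = (x - c) * f' z2"
    using mvt[of c x] c cx x1 by auto
  obtain z3 where z3: "x < z3" "z3 < 1" "f 1 - f x = (1 - x) * f' z3"
    using mvt[of x 1] c cx x1 by auto
  have "(x - c) * f' z2 < 0" "0 < (1 - x) * f' z3"
    using z2(3) z3(3) fx fc f1 by linarith+
  then have f'_signs: "f' z1 = 0" "f' z2 < 0" "0 < f' z3"
    using z1 f0 fc cx x1 by (simp_all add: mult_less_0_iff zero_less_mult_iff)
  have sgn_f': "sgn (f' y) = sgn (P y)" if "0 < y" "y < 1" for y
    unfolding f'_def P_def using sgn_powr_balance_deriv t that by simp
  have "P z1 = 0" "P z2 < 0" "0 < P z3"
    using f'_signs sgn_f'[of z1] sgn_f'[of z2] sgn_f'[of z3] z1 z2 z3 c cx x1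
    by (auto simp: sgn_if split: if_splits)
  moreover have "concave_on {0<..<1} P"
    unfolding P_def using t by (intro concave_on_ln_weighted) auto
  then have "concave_on {z1..z3} P"
    unfolding concave_on_def by (rule convex_on_subset) (use z1 z3 c x1 in auto)
  then have "min (P z1) (P z3) \<le> P z2"
    using z1 z2 z3 cx by (intro concave_on_ge_min) auto
  ultimately show False by linarith
qed

lemma tau_root:
  assumes "2 \<le> M"
  shows "1/2 \<le> tau M" and "tau M < 1"
    and "(1 / real M) powr (2 * tau M) + ((real M - 1) / real M) powr tau M = 1"
proof -
  define p where "p = 1 / real M"
  define q where "q = (real M - 1) / real M"
  define f where "f t = p powr (2*t) + q powr t" for t :: real
  have p: "0 < p" "p < 1" and q: "0 < q" "q < 1" and pq: "p + q = 1"
    using assms by (auto simp: p_def q_def field_simps)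
  have f_decreasing: "f t' < f t" if "t < t'" for t t'
    using p q that by (simp add: f_def add_strict_mono powr_less_mono')
  have "q powr 1 \<le> q powr (1/2)" using q by (intro powr_mono') auto
  then have "1 \<le> f (1/2)" using p q pq by (simp add: f_def)
  moreover have "f 1 < 1" using p q pq powr_less_mono'[of p 1 2] by (simp add: f_def)
  moreover have "isCont f t" for t using p q unfolding f_def by (intro continuous_intros) auto
  ultimately obtain t0 where t0: "1/2 \<le> t0" "t0 \<le> 1" "f t0 = 1"
    using IVT2[of f 1 1 "1/2"] by auto
  have "\<exists>!t. t > 0 \<and> f t = 1"
  proof (rule ex1I[of _ t0])
    show "t = t0" if "t > 0 \<and> f t = 1" for t
      using that t0 f_decreasing[of t t0] f_decreasing[of t0 t] by (cases t t0 rule: linorder_cases) auto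
  qed (use t0 in simp)
  then have "tau M = t0"
    unfolding tau_def f_def p_def q_def by (rule the1_equality) (use t0 in \<open>simp add: f_def p_def q_def\<close>)
  then show "1/2 \<le> tau M" and "tau M < 1"
    and "(1 / real M) powr (2 * tau M) + ((real M - 1) / real M) powr tau M = 1"
    using t0 \<open>f 1 < 1\<close> by (auto simp: f_def p_def q_def le_less)
qed

lemma one_le_powr_double_tau_add_powr_compl:
  assumes "2 \<le> M" "1 / real M \<le> x" "x \<le> 1"
  shows "1 \<le> x powr (2 * tau M) + (1 - x) powr tau M"
proof (rule one_le_powr_double_add_powr_compl)
  have "1 - 1 / real M = (real M - 1) / real M" using assms(1) by (simp add: field_simps)
  then show "(1 / real M) powr (2 * tau M) + (1 - 1 / real M) powr tau M = 1"
    using tau_root(3)[OF assms(1)] by simp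
qed (use assms tau_root[OF assms(1)] in auto)

lemma powr_add_le_add_powr:
  fixes x y t :: real
  assumes "0 \<le> x" "0 \<le> y" "0 < t" "t \<le> 1"
  shows "(x + y) powr t \<le> x powr t + y powr t"
proof (cases "x + y = 0")
  case True
  then show ?thesis using assms by auto
next
  case False
  define s where "s = x + y"
  have s: "0 < s" using False assms unfolding s_def by auto
  have "x / s \<le> (x / s) powr t" "y / s \<le> (y / s) powr t"
    using powr_mono'[of t 1 "x/s"] powr_mono'[of t 1 "y/s"] assms s by (auto simp: s_def field_simps)
  then have "s powr t * (x / s + y / s) \<le> s powr t * ((x / s) powr t + (y / s) powr t)"
    by (intro mult_left_mono) auto
  moreover have "x / s + y / s = 1" using s by (simp add: s_def flip: add_divide_distrib)
  moreover have "s powr t * ((x / s) powr t + (y / s) powr t) = x powr t + y powr t"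
    using s assms by (simp add: powr_divide distrib_left)
  ultimately show ?thesis by (simp add: s_def)
qed

lemma powr_sum_le_sum_powr:
  fixes f :: "'a \<Rightarrow> real"
  assumes "finite A" "\<And>i. i \<in> A \<Longrightarrow> 0 \<le> f i" "0 < t" "t \<le> 1"
  shows "(\<Sum>i\<in>A. f i) powr t \<le> (\<Sum>i\<in>A. f i powr t)"
  using assms
proof (induction A rule: finite_induct)
  case (insert x F)
  have "(\<Sum>i\<in>insert x F. f i) powr t \<le> f x powr t + (\<Sum>i\<in>F. f i) powr t"
    using insert by (simp add: powr_add_le_add_powr sum_nonneg)
  also have "\<dots> \<le> f x powr t + (\<Sum>i\<in>F. f i powr t)" using insert by auto
  finally show ?case using insert by simp
qed simp

definition antidiag_max :: "real \<Rightarrow> nat \<Rightarrow> nat \<Rightarrow> (nat \<Rightarrow> real) \<Rightarrow> (nat \<Rightarrow> real) \<Rightarrow> nat \<Rightarrow> real"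
  where "antidiag_max t m n a b k = Max {(a r * b s) powr t | r s. r < m \<and> s < n \<and> r + s = k}"

definition antidiag_max_sum :: "real \<Rightarrow> nat \<Rightarrow> nat \<Rightarrow> (nat \<Rightarrow> real) \<Rightarrow> (nat \<Rightarrow> real) \<Rightarrow> real"
  where "antidiag_max_sum t m n a b = (\<Sum>k<m+n-1. antidiag_max t m n a b k)"

lemma finite_antidiag_powr:
  fixes m n k :: nat
  shows "finite {(a r * b s) powr t | r s. r < m \<and> s < n \<and> r + s = k}"
proof (rule finite_subset)
  show "{(a r * b s) powr t | r s. r < m \<and> s < n \<and> r + s = k}
        \<subseteq> (\<lambda>(r, s). (a r * b s) powr t) ` ({..<m} \<times> {..<n})" by auto
  show "finite ((\<lambda>(r, s). (a r * b s) powr t) ` ({..<m} \<times> {..<n}))" by simp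
qed

lemma antidiag_max_ge: "r < m \<Longrightarrow> s < n \<Longrightarrow> (a r * b s) powr t \<le> antidiag_max t m n a b (r + s)"
  unfolding antidiag_max_def by (rule Max_ge[OF finite_antidiag_powr]) auto

lemma antidiag_max_attained:
  assumes "k < m + n - 1" "1 \<le> m" "1 \<le> n"
  obtains r s where "r < m" "s < n" "r + s = k" "antidiag_max t m n a b k = (a r * b s) powr t"
proof -
  have "min k (m - 1) < m" "k - min k (m - 1) < n" "min k (m - 1) + (k - min k (m - 1)) = k"
    using assms by auto
  then have "{(a r * b s) powr t | r s. r < m \<and> s < n \<and> r + s = k} \<noteq> {}" by blast
  then have "antidiag_max t m n a b k \<in> {(a r * b s) powr t | r s. r < m \<and> s < n \<and> r + s = k}"
    unfolding antidiag_max_def by (rule Max_in[OF finite_antidiag_powr])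
  then show ?thesis using that by blast
qed

lemma antidiag_max_nonneg: "k < m + n - 1 \<Longrightarrow> 1 \<le> m \<Longrightarrow> 1 \<le> n \<Longrightarrow> 0 \<le> antidiag_max t m n a b k"
  by (metis antidiag_max_attained powr_ge_zero)

lemma antidiag_max_sum_nonneg: "1 \<le> m \<Longrightarrow> 1 \<le> n \<Longrightarrow> 0 \<le> antidiag_max_sum t m n a b"
  unfolding antidiag_max_sum_def by (intro sum_nonneg) (auto intro: antidiag_max_nonneg)

lemma antidiag_max_sum_swap: "antidiag_max_sum t n m b a = antidiag_max_sum t m n a b"
proof -
  have "antidiag_max t n m b a k = antidiag_max t m n a b k" for k
    unfolding antidiag_max_def by (rule arg_cong[where f = Max]) (auto; metis add.commute mult.commute)
  then show ?thesis by (simp add: antidiag_max_sum_def add.commute)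
qed

lemma antidiag_max_sum_peel:
  assumes "2 \<le> m" "1 \<le> n"
  shows "(a 0 * b 0) powr t + antidiag_max_sum t (m-1) n (\<lambda>r. a (Suc r)) b \<le> antidiag_max_sum t m n a b"
proof -
  have "m + n - 1 = Suc (m - 1 + n - 1)" using assms by simp
  then have "antidiag_max_sum t m n a b
      = antidiag_max t m n a b 0 + (\<Sum>k<m - 1 + n - 1. antidiag_max t m n a b (Suc k))"
    unfolding antidiag_max_sum_def by (simp only: sum.lessThan_Suc_shift)
  moreover have "(a 0 * b 0) powr t \<le> antidiag_max t m n a b 0"
    using antidiag_max_ge[of 0 m 0 n a b t] assms by simp
  moreover have "antidiag_max t (m-1) n (\<lambda>r. a (Suc r)) b k \<le> antidiag_max t m n a b (Suc k)"
    if k: "k < m - 1 + n - 1" for k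
  proof -
    have "1 \<le> m - 1" using assms(1) by simp
    then obtain r s where "r < m - 1" "s < n" "r + s = k"
      "antidiag_max t (m-1) n (\<lambda>r. a (Suc r)) b k = (a (Suc r) * b s) powr t"
      using antidiag_max_attained[OF k _ assms(2)] by blast
    then show ?thesis using antidiag_max_ge[of "Suc r" m s n a b t] by simp
  qed
  then have "antidiag_max_sum t (m-1) n (\<lambda>r. a (Suc r)) b
      \<le> (\<Sum>k<m - 1 + n - 1. antidiag_max t m n a b (Suc k))"
    unfolding antidiag_max_sum_def by (intro sum_mono) auto
  ultimately show ?thesis by linarith
qed

lemma antidiag_max_sum_single_row:
  assumes "1 \<le> n" "0 < t" "t \<le> 1" "0 \<le> a 0" "\<And>s. s < n \<Longrightarrow> 0 \<le> b s"
  shows "a 0 powr t * (\<Sum>s<n. b s) powr t \<le> antidiag_max_sum t 1 n a b"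
proof -
  have "a 0 powr t * (\<Sum>s<n. b s) powr t = (a 0 * (\<Sum>s<n. b s)) powr t"
    using assms by (simp add: powr_mult sum_nonneg)
  also have "\<dots> = (\<Sum>s<n. a 0 * b s) powr t" by (simp add: sum_distrib_left)
  also have "\<dots> \<le> (\<Sum>s<n. (a 0 * b s) powr t)"
    using assms by (intro powr_sum_le_sum_powr) auto
  also have "\<dots> \<le> (\<Sum>k<n. antidiag_max t 1 n a b k)"
    using antidiag_max_ge[of 0 1 _ n a b t] by (intro sum_mono) auto
  finally show ?thesis by (simp add: antidiag_max_sum_def)
qed

lemma powr_mult_le_head_add_tail:
  fixes A B a0 b0 t :: real
  assumes "0 < A" "0 < B" "0 \<le> a0" "a0 \<le> A" "0 \<le> b0" "a0 / A \<le> b0 / B" "0 \<le> t"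
    and balance: "1 \<le> (a0 / A) powr (2*t) + (1 - a0 / A) powr t"
  shows "A powr t * B powr t \<le> (a0 * b0) powr t + (A - a0) powr t * B powr t"
proof -
  define x where "x = a0 / A"
  define y where "y = b0 / B"
  have "x powr (2*t) = (x * x) powr t" by (simp add: powr_mult flip: powr_add)
  also have "\<dots> \<le> (x * y) powr t"
    using assms by (intro powr_mono2 mult_left_mono) (auto simp: x_def y_def)
  finally have "x powr (2*t) \<le> (x * y) powr t" .
  then have "1 \<le> (x * y) powr t + (1 - x) powr t" using balance by (simp add: x_def)
  have "a0 * b0 = (x * y) * (A * B)" "A - a0 = (1 - x) * A"
    using assms by (simp_all add: x_def y_def field_simps)
  moreover have "0 \<le> x * y" "0 \<le> 1 - x" using assms by (simp_all add: x_def y_def)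
  ultimately have "(a0 * b0) powr t = (x * y) powr t * (A powr t * B powr t)"
    and "(A - a0) powr t = (1 - x) powr t * A powr t"
    using assms by (simp_all add: powr_mult)
  moreover have "A powr t * B powr t \<le> ((x * y) powr t + (1 - x) powr t) * (A powr t * B powr t)"
    using mult_right_mono[OF \<open>1 \<le> (x * y) powr t + (1 - x) powr t\<close>, of "A powr t * B powr t"]
    by simp
  ultimately show ?thesis by (simp add: algebra_simps)
qed

lemma antidiag_max_sum_step:
  assumes "2 \<le> m" "1 \<le> n" "0 \<le> t"
    and a_nonneg: "\<And>r. r < m \<Longrightarrow> 0 \<le> a r" and "0 \<le> b 0"
    and A: "0 < (\<Sum>r<m. a r)" and B: "0 < (\<Sum>s<n. b s)"
    and ratio: "a 0 / (\<Sum>r<m. a r) \<le> b 0 / (\<Sum>s<n. b s)"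
    and balance: "1 \<le> (a 0 / (\<Sum>r<m. a r)) powr (2*t) + (1 - a 0 / (\<Sum>r<m. a r)) powr t"
    and tail: "(\<Sum>r<m-1. a (Suc r)) powr t * (\<Sum>s<n. b s) powr t
                 \<le> antidiag_max_sum t (m-1) n (\<lambda>r. a (Suc r)) b"
  shows "(\<Sum>r<m. a r) powr t * (\<Sum>s<n. b s) powr t \<le> antidiag_max_sum t m n a b"
proof -
  have split: "(\<Sum>r<m. a r) = a 0 + (\<Sum>r<m-1. a (Suc r))"
    using sum.lessThan_Suc_shift[of a "m - 1"] assms(1) by simp
  have "0 \<le> (\<Sum>r<m-1. a (Suc r))" using a_nonneg by (intro sum_nonneg) simp
  then have "a 0 \<le> (\<Sum>r<m. a r)" using split by simp
  then have "(\<Sum>r<m. a r) powr t * (\<Sum>s<n. b s) powr t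
      \<le> (a 0 * b 0) powr t + ((\<Sum>r<m. a r) - a 0) powr t * (\<Sum>s<n. b s) powr t"
    using assms by (intro powr_mult_le_head_add_tail) auto
  also have "\<dots> \<le> (a 0 * b 0) powr t + antidiag_max_sum t (m-1) n (\<lambda>r. a (Suc r)) b"
    using tail split by simp
  also have "\<dots> \<le> antidiag_max_sum t m n a b"
    using antidiag_max_sum_peel assms(1,2) .
  finally show ?thesis .
qed

lemma head_ratio_bounds:
  assumes "antimono_on {..<m} a" "\<And>r. r < m \<Longrightarrow> 0 \<le> a r" "0 < (\<Sum>r<m. a r)" "m \<le> M"
  shows "1 / real M \<le> a 0 / (\<Sum>r<m. a r)" and "a 0 / (\<Sum>r<m. a r) \<le> 1"
proof -
  have "m \<noteq> 0" using assms(3) by (cases m) auto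
  have "(\<Sum>r<m. a r) \<le> (\<Sum>r<m. a 0)"
    using assms(1) \<open>m \<noteq> 0\<close> by (intro sum_mono) (simp add: monotone_on_def)
  then have "1 / real m \<le> a 0 / (\<Sum>r<m. a r)"
    using assms(3) \<open>m \<noteq> 0\<close> by (simp add: field_simps)
  moreover have "1 / real M \<le> 1 / real m" using assms(4) \<open>m \<noteq> 0\<close> by (simp add: frac_le)
  ultimately show "1 / real M \<le> a 0 / (\<Sum>r<m. a r)" by linarith
  have "a 0 \<le> (\<Sum>r<m. a r)"
    using assms(2) \<open>m \<noteq> 0\<close> by (intro member_le_sum) auto
  then show "a 0 / (\<Sum>r<m. a r) \<le> 1" using assms(3) by simp
qed

lemma antimono_on_shift:
  "antimono_on {..<m} a \<Longrightarrow> antimono_on {..<m-1} (\<lambda>r. a (Suc r))"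
  by (auto simp: monotone_on_def)

lemma antidiag_max_sum_ge_decreasing:
  assumes t: "0 < t" "t \<le> 1"
    and balance: "\<And>x. 1 / real M \<le> x \<Longrightarrow> x \<le> 1 \<Longrightarrow> 1 \<le> x powr (2*t) + (1 - x) powr t"
    and "1 \<le> m" "m \<le> M" "1 \<le> n" "n \<le> M"
    and "\<And>r. r < m \<Longrightarrow> 0 \<le> a r" "antimono_on {..<m} a"
    and "\<And>s. s < n \<Longrightarrow> 0 \<le> b s" "antimono_on {..<n} b"
  shows "(\<Sum>r<m. a r) powr t * (\<Sum>s<n. b s) powr t \<le> antidiag_max_sum t m n a b"
  using assms(4-)
proof (induction "m + n" arbitrary: m n a b rule: less_induct)
  case less
  define A where "A = (\<Sum>r<m. a r)"
  define B where "B = (\<Sum>s<n. b s)"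
  have "0 \<le> A" "0 \<le> B" unfolding A_def B_def using less.prems by (auto intro: sum_nonneg)
  consider "m = 1" | "n = 1" | "A = 0 \<or> B = 0" | "2 \<le> m" "2 \<le> n" "0 < A" "0 < B"
    using less.prems \<open>0 \<le> A\<close> \<open>0 \<le> B\<close> by linarith
  then show ?case
  proof cases
    case 1
    then show ?thesis using antidiag_max_sum_single_row[of n t a b] less.prems t by simp
  next
    case 2
    then show ?thesis
      using antidiag_max_sum_single_row[of m t b a] antidiag_max_sum_swap[of t 1 m b a] less.prems t
      by (simp add: mult.commute)
  next
    case 3
    then show ?thesis
      using antidiag_max_sum_nonneg[of m n t a b] less.prems t unfolding A_def B_def by auto
  next
    case 4
    have ratios: "1 / real M \<le> a 0 / A" "a 0 / A \<le> 1" "1 / real M \<le> b 0 / B" "b 0 / B \<le> 1"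
      using head_ratio_bounds[of m a M] head_ratio_bounds[of n b M] less.prems 4
      unfolding A_def B_def by simp_all
    have "0 \<le> a 0" "0 \<le> b 0" using less.prems 4 by simp_all
    show ?thesis
    proof (cases "a 0 / A \<le> b 0 / B")
      case True
      have "(\<Sum>r<m-1. a (Suc r)) powr t * B powr t \<le> antidiag_max_sum t (m-1) n (\<lambda>r. a (Suc r)) b"
        unfolding B_def
        by (rule less.hyps) (use 4 less.prems antimono_on_shift[of m a] in auto)
      from antidiag_max_sum_step[OF 4(1) \<open>1 \<le> n\<close> _ less.prems(5) \<open>0 \<le> b 0\<close> 4(3,4)[unfolded A_def B_def]
          True[unfolded A_def B_def] balance[OF ratios(1,2), unfolded A_def] this[unfolded B_def]]
      show ?thesis using t by simp
    next
      case False
      have "(\<Sum>s<n-1. b (Suc s)) powr t * (\<Sum>r<m. a r) powr t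
          \<le> antidiag_max_sum t (n-1) m (\<lambda>s. b (Suc s)) a"
        using less.hyps[of m "n-1" a "\<lambda>s. b (Suc s)"] 4 less.prems antimono_on_shift[of n b]
        by (simp add: antidiag_max_sum_swap mult.commute)
      from antidiag_max_sum_step[OF 4(2) \<open>1 \<le> m\<close> _ less.prems(7) \<open>0 \<le> a 0\<close> 4(4,3)[unfolded A_def B_def]
          _ balance[OF ratios(3,4), unfolded B_def] this]
      have "(\<Sum>s<n. b s) powr t * (\<Sum>r<m. a r) powr t \<le> antidiag_max_sum t n m b a"
        using t False unfolding A_def B_def by simp
      then show ?thesis by (simp add: antidiag_max_sum_swap mult.commute)
    qed
  qed
qed

lemma decreasing_rearrangement:
  fixes U :: "nat \<Rightarrow> real"
  assumes U_nonneg: "\<And>k. k < m \<Longrightarrow> 0 \<le> U k"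
  obtains a where "\<And>r. r < m \<Longrightarrow> 0 \<le> a r" "antimono_on {..<m} a"
    "(\<Sum>r<m. a r) = (\<Sum>k<m. U k)" "\<And>r. r < m \<Longrightarrow> r + 1 \<le> card {k. k < m \<and> a r \<le> U k}"
proof
  define xs where "xs = map U [0..<m]"
  define ys where "ys = rev (sort xs)"
  have len: "length ys = m" by (simp add: ys_def xs_def)
  have mset_ys: "mset ys = mset xs" by (simp add: ys_def)
  have sorted: "sorted (rev ys)" by (simp add: ys_def)
  show "0 \<le> ys ! r" if "r < m" for r
  proof -
    have "ys ! r \<in> set xs" using that len mset_ys by (metis nth_mem set_mset_mset)
    then show ?thesis using U_nonneg by (auto simp: xs_def)
  qed
  show "antimono_on {..<m} (\<lambda>r. ys ! r)"
    using sorted_rev_nth_mono[OF sorted] len by (auto simp: monotone_on_def)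
  have "(\<Sum>r<m. ys ! r) = sum_list ys" using len by (simp add: sum_list_sum_nth atLeast0LessThan)
  also have "\<dots> = sum_list xs" using mset_ys by (metis sum_mset_sum_list)
  finally show "(\<Sum>r<m. ys ! r) = (\<Sum>k<m. U k)" by (simp add: xs_def sum_list_sum_nth atLeast0LessThan)
  show "r + 1 \<le> card {k. k < m \<and> ys ! r \<le> U k}" if r: "r < m" for r
  proof -
    define P where "P v \<longleftrightarrow> ys ! r \<le> v" for v
    have "card {k. k < m \<and> ys ! r \<le> U k} = card {i. i < length xs \<and> P (xs ! i)}"
      by (rule arg_cong[where f = card]) (auto simp: xs_def P_def)
    also have "\<dots> = length (filter P xs)" by (simp add: length_filter_conv_card)
    also have "\<dots> = length (filter P ys)" using mset_ys by (metis mset_filter size_mset)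
    also have "\<dots> = card {i. i < m \<and> P (ys ! i)}" by (simp add: length_filter_conv_card len)
    also have "card {..r} \<le> \<dots>"
      using r sorted_rev_nth_mono[OF sorted] len by (intro card_mono) (auto simp: P_def)
    finally show ?thesis by simp
  qed
qed

lemma card_sumset_ge:
  fixes I J :: "nat set"
  assumes "finite I" "finite J" "I \<noteq> {}" "J \<noteq> {}"
  shows "card I + card J \<le> card {i + j | i j. i \<in> I \<and> j \<in> J} + 1"
proof -
  define X where "X = (\<lambda>i. i + Min J) ` I"
  define Y where "Y = (\<lambda>j. Max I + j) ` J"
  have "card X = card I" "card Y = card J"
    unfolding X_def Y_def by (simp_all add: card_image)
  have "X \<inter> Y \<subseteq> {Max I + Min J}"
  proof
    fix z assume "z \<in> X \<inter> Y"
    then obtain i j where "i \<in> I" "j \<in> J" "z = i + Min J" "z = Max I + j"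
      by (auto simp: X_def Y_def)
    moreover have "i \<le> Max I" "Min J \<le> j" using assms calculation by simp_all
    ultimately show "z \<in> {Max I + Min J}" by simp
  qed
  then have "card (X \<inter> Y) \<le> 1" using card_mono[of "{Max I + Min J}"] by simp
  moreover have "card X + card Y = card (X \<union> Y) + card (X \<inter> Y)"
    using assms by (intro card_Un_Int) (simp_all add: X_def Y_def)
  moreover have "card (X \<union> Y) \<le> card {i + j | i j. i \<in> I \<and> j \<in> J}"
  proof (rule card_mono)
    have "{i + j | i j. i \<in> I \<and> j \<in> J} = (\<lambda>(i, j). i + j) ` (I \<times> J)" by auto
    then show "finite {i + j | i j. i \<in> I \<and> j \<in> J}" using assms by simp
    have "Max I \<in> I" "Min J \<in> J" using assms by simp_all
    then show "X \<union> Y \<subseteq> {i + j | i j. i \<in> I \<and> j \<in> J}" by (auto simp: X_def Y_def)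
  qed
  ultimately show ?thesis using \<open>card X = card I\<close> \<open>card Y = card J\<close> by linarith
qed

lemma sum_le_sum_of_domination_counts:
  fixes g H :: "nat \<Rightarrow> real"
  assumes H_nonneg: "\<And>u. u < K \<Longrightarrow> 0 \<le> H u"
    and counts: "\<And>k. k < K \<Longrightarrow> k + 1 \<le> card {u. u < K \<and> g k \<le> H u}"
  shows "(\<Sum>k<K. g k) \<le> (\<Sum>u<K. H u)"
proof -
  have "\<exists>F. F \<subseteq> {..<K} \<and> card F = j \<and> (\<Sum>k<j. g k) \<le> (\<Sum>u\<in>F. H u)" if "j \<le> K" for j
    using that
  proof (induction j)
    case 0
    show ?case by (intro exI[of _ "{}"]) simp
  next
    case (Suc j)
    then obtain F where F: "F \<subseteq> {..<K}" "card F = j" "(\<Sum>k<j. g k) \<le> (\<Sum>u\<in>F. H u)" by auto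
    have "finite F" using F(1) finite_subset by blast
    have "j + 1 \<le> card {u. u < K \<and> g j \<le> H u}" using counts Suc.prems by simp
    then have "\<not> {u. u < K \<and> g j \<le> H u} \<subseteq> F"
      using card_mono[OF \<open>finite F\<close>, of "{u. u < K \<and> g j \<le> H u}"] F(2) by linarith
    then obtain u where u: "u < K" "g j \<le> H u" "u \<notin> F" by blast
    show ?case
    proof (intro exI[of _ "insert u F"] conjI)
      show "insert u F \<subseteq> {..<K}" "card (insert u F) = Suc j"
        using F \<open>finite F\<close> u by auto
      show "(\<Sum>k<Suc j. g k) \<le> (\<Sum>v\<in>insert u F. H v)"
        using F(3) u \<open>finite F\<close> by simp
    qed
  qed
  then obtain F where "F \<subseteq> {..<K}" "(\<Sum>k<K. g k) \<le> (\<Sum>u\<in>F. H u)" by blast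
  moreover have "(\<Sum>u\<in>F. H u) \<le> (\<Sum>u<K. H u)"
    using calculation(1) H_nonneg by (intro sum_mono2) auto
  ultimately show ?thesis by linarith
qed

lemma antidiag_max_rank:
  fixes U V a b :: "nat \<Rightarrow> real"
  assumes k: "k < m + n - 1" and "1 \<le> m" "1 \<le> n" "0 \<le> t"
    and "\<And>r. r < m \<Longrightarrow> 0 \<le> a r" "\<And>s. s < n \<Longrightarrow> 0 \<le> b s" "\<And>i. i < m \<Longrightarrow> 0 \<le> U i"
    and rank_a: "\<And>r. r < m \<Longrightarrow> r + 1 \<le> card {i. i < m \<and> a r \<le> U i}"
    and rank_b: "\<And>s. s < n \<Longrightarrow> s + 1 \<le> card {j. j < n \<and> b s \<le> V j}"
  shows "k + 1 \<le> card {u. u < m + n - 1 \<and> antidiag_max t m n a b k \<le> antidiag_max t m n U V u}"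
proof -
  obtain r s where rs: "r < m" "s < n" "r + s = k" "antidiag_max t m n a b k = (a r * b s) powr t"
    using antidiag_max_attained[OF k] assms(2,3) by blast
  define I where "I = {i. i < m \<and> a r \<le> U i}"
  define J where "J = {j. j < n \<and> b s \<le> V j}"
  have "r + 1 \<le> card I" "s + 1 \<le> card J" using rank_a rank_b rs by (simp_all add: I_def J_def)
  moreover have "finite I" "finite J" by (simp_all add: I_def J_def)
  moreover have "I \<noteq> {}" "J \<noteq> {}" using calculation by auto
  ultimately have "k + 1 \<le> card {i + j | i j. i \<in> I \<and> j \<in> J}"
    using card_sumset_ge[of I J] rs by linarith
  also have "\<dots> \<le> card {u. u < m + n - 1 \<and> antidiag_max t m n a b k \<le> antidiag_max t m n U V u}"
  proof (rule card_mono)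
    show "{i + j | i j. i \<in> I \<and> j \<in> J}
        \<subseteq> {u. u < m + n - 1 \<and> antidiag_max t m n a b k \<le> antidiag_max t m n U V u}"
    proof clarify
      fix i j assume "i \<in> I" "j \<in> J"
      then have ij: "i < m" "j < n" "a r \<le> U i" "b s \<le> V j" by (simp_all add: I_def J_def)
      have "(a r * b s) powr t \<le> (U i * V j) powr t"
        using ij rs assms by (intro powr_mono2 mult_mono) auto
      also have "\<dots> \<le> antidiag_max t m n U V (i + j)" using ij by (intro antidiag_max_ge)
      finally show "i + j < m + n - 1 \<and> antidiag_max t m n a b k \<le> antidiag_max t m n U V (i + j)"
        using ij rs by simp
    qed
  qed simp
  finally show ?thesis .
qed

lemma antidiag_max_sum_le_of_ranks:
  fixes U V a b :: "nat \<Rightarrow> real"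
  assumes "1 \<le> m" "1 \<le> n" "0 \<le> t"
    and "\<And>r. r < m \<Longrightarrow> 0 \<le> a r" "\<And>s. s < n \<Longrightarrow> 0 \<le> b s" "\<And>i. i < m \<Longrightarrow> 0 \<le> U i"
    and "\<And>r. r < m \<Longrightarrow> r + 1 \<le> card {i. i < m \<and> a r \<le> U i}"
    and "\<And>s. s < n \<Longrightarrow> s + 1 \<le> card {j. j < n \<and> b s \<le> V j}"
  shows "antidiag_max_sum t m n a b \<le> antidiag_max_sum t m n U V"
  unfolding antidiag_max_sum_def
proof (rule sum_le_sum_of_domination_counts)
  show "0 \<le> antidiag_max t m n U V u" if "u < m + n - 1" for u
    using that assms(1,2) by (rule antidiag_max_nonneg)
  show "k + 1 \<le> card {u. u < m + n - 1 \<and> antidiag_max t m n a b k \<le> antidiag_max t m n U V u}"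
    if "k < m + n - 1" for k
    by (rule antidiag_max_rank[OF that assms])
qed

theorem lemma8:
  fixes M :: nat and U V :: "nat \<Rightarrow> real"
  assumes "M \<ge> 2"
    and "\<And>k. k < M \<Longrightarrow> U k \<ge> 0"
    and "\<And>k. k < M \<Longrightarrow> V k \<ge> 0"
  shows "(\<Sum>m\<le>2 * M - 2. Max {(U k * V l) powr tau M | k l.
              k < M \<and> l < M \<and> k + l = m})
         \<ge> (\<Sum>k<M. U k) powr tau M * (\<Sum>l<M. V l) powr tau M"
proof -
  obtain a where a: "\<And>r. r < M \<Longrightarrow> 0 \<le> a r" "antimono_on {..<M} a"
    "(\<Sum>r<M. a r) = (\<Sum>k<M. U k)" "\<And>r. r < M \<Longrightarrow> r + 1 \<le> card {k. k < M \<and> a r \<le> U k}"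
    using decreasing_rearrangement assms(2) by blast
  obtain b where b: "\<And>s. s < M \<Longrightarrow> 0 \<le> b s" "antimono_on {..<M} b"
    "(\<Sum>s<M. b s) = (\<Sum>k<M. V k)" "\<And>s. s < M \<Longrightarrow> s + 1 \<le> card {k. k < M \<and> b s \<le> V k}"
    using decreasing_rearrangement assms(3) by blast
  have t: "0 < tau M" "tau M \<le> 1" using tau_root(1,2)[OF assms(1)] by simp_all
  have "{..<M + M - 1} = {..2 * M - 2}" using assms(1) by auto
  have "(\<Sum>k<M. U k) powr tau M * (\<Sum>l<M. V l) powr tau M
      = (\<Sum>r<M. a r) powr tau M * (\<Sum>s<M. b s) powr tau M"
    using a(3) b(3) by simp
  also have "\<dots> \<le> antidiag_max_sum (tau M) M M a b"
    by (rule antidiag_max_sum_ge_decreasing[OF t one_le_powr_double_tau_add_powr_compl[OF assms(1)]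
          _ order_refl _ order_refl a(1,2) b(1,2)]) (use assms(1) in simp_all)
  also have "\<dots> \<le> antidiag_max_sum (tau M) M M U V"
    by (rule antidiag_max_sum_le_of_ranks[OF _ _ _ a(1) b(1) assms(2) a(4) b(4)])
      (use assms(1) t in simp_all)
  also have "\<dots> = (\<Sum>m\<le>2 * M - 2. Max {(U k * V l) powr tau M | k l. k < M \<and> l < M \<and> k + l = m})"
    using \<open>{..<M + M - 1} = {..2 * M - 2}\<close> by (simp add: antidiag_max_sum_def antidiag_max_def)
  finally show ?thesis .
qed

end
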